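(* Let $f:\{0,1\}^N\to\{0,1\}$ be a partial function, and let $x\in\mathrm{Dom}(f)$. If $f(x)=0$, then \[\mathrm{C}_f(x)\leq\mathrm{RC}_f(x)(1+\log|f^{-1}(1)|)\] and if $f(x)=1$, then \[\mathrm{C}_f(x)\leq\mathrm{RC}_f(x)(1+\log|f^{-1}(0)|).\]
   Context: $\mathrm{C}_f(x)$ is the certificate complexity of $f$ at $x$ (minimum size of a partial assignment consistent with $x$ on which $f$ is constant over $\mathrm{Dom}(f)$). $\mathrm{RC}_f(x)$ is the randomized certificate complexity of $f$ at $x$, defined as the fractional block sensitivity of $x$ (the fractional packing number of the sensitive blocks of $x$). Logarithms are base 2. *)

theory Defs
  imports Complex_Main
begin

text \<open>Inputs in {0,1}^N are Boolean lists of length N (True = 1, False = 0).\<close>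

definition dom_f :: "nat \<Rightarrow> (bool list \<Rightarrow> bool option) \<Rightarrow> bool list set" where
  "dom_f N f = {x. length x = N \<and> f x \<noteq> None}"

definition preimage_f :: "nat \<Rightarrow> (bool list \<Rightarrow> bool option) \<Rightarrow> bool \<Rightarrow> bool list set" where
  "preimage_f N f b = {y \<in> dom_f N f. f y = Some b}"

text \<open>A certificate for x: a set S of positions (the partial assignment x restricted to S)
such that f is constant on all domain points consistent with it.\<close>
definition is_certificate :: "nat \<Rightarrow> (bool list \<Rightarrow> bool option) \<Rightarrow> bool list \<Rightarrow> nat set \<Rightarrow> bool" where
  "is_certificate N f x S \<longleftrightarrow> S \<subseteq> {..<N} \<and>
     (\<forall>y \<in> dom_f N f. \<forall>z \<in> dom_f N f.
        (\<forall>i \<in> S. y ! i = x ! i) \<longrightarrow> (\<forall>i \<in> S. z ! i = x ! i) \<longrightarrow> f y = f z)"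

definition cert_complexity :: "nat \<Rightarrow> (bool list \<Rightarrow> bool option) \<Rightarrow> bool list \<Rightarrow> nat" where
  "cert_complexity N f x = Min (card ` {S. is_certificate N f x S})"

definition flip_block :: "bool list \<Rightarrow> nat set \<Rightarrow> bool list" where
  "flip_block x B = map (\<lambda>i. if i \<in> B then \<not> x ! i else x ! i) [0..<length x]"

definition sensitive_blocks :: "nat \<Rightarrow> (bool list \<Rightarrow> bool option) \<Rightarrow> bool list \<Rightarrow> nat set set" where
  "sensitive_blocks N f x = {B. B \<subseteq> {..<N} \<and> flip_block x B \<in> dom_f N f \<and> f (flip_block x B) \<noteq> f x}"

text \<open>Fractional block sensitivity = fractional packing number of the sensitive blocks.\<close>
definition frac_packing :: "nat \<Rightarrow> (bool list \<Rightarrow> bool option) \<Rightarrow> bool list \<Rightarrow> (nat set \<Rightarrow> real) \<Rightarrow> bool" where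
  "frac_packing N f x w \<longleftrightarrow> (\<forall>B \<in> sensitive_blocks N f x. w B \<ge> 0) \<and>
     (\<forall>i < N. (\<Sum>B \<in> {B \<in> sensitive_blocks N f x. i \<in> B}. w B) \<le> 1)"

definition RC :: "nat \<Rightarrow> (bool list \<Rightarrow> bool option) \<Rightarrow> bool list \<Rightarrow> real" where
  "RC N f x = Sup {(\<Sum>B \<in> sensitive_blocks N f x. w B) | w. frac_packing N f x w}"

end

theory Submission
  imports Defs
begin

text \<open>The sensitive blocks of x must all be hit by any certificate, and conversely every set
of positions hitting all of them is a certificate. The greedy hitting set (repeatedly take the
position lying in the most remaining blocks, say d of them, and charge 1/d to each of these
blocks) has size equal to the total charge, while the charge accumulated on the blocks
through any one position is at most the harmonic number H_k \<le> 1 + log k, where k is at most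
the number M of sensitive blocks. Dividing the charges by 1 + log M therefore gives a
fractional packing, so C_f(x) \<le> RC_f(x) (1 + log M). Finally, flipping x on distinct
sensitive blocks yields distinct inputs with the opposite value, so M \<le> |f^{-1}(1 - f(x))|.\<close>

text \<open>Upper bound for the harmonic number H_n; H_0 = 0 is kept exact.\<close>
definition log_harmonic :: "nat \<Rightarrow> real" where
  "log_harmonic n = (if n = 0 then 0 else 1 + log 2 (real n))"

lemma log_harmonic_mono: "a \<le> b \<Longrightarrow> log_harmonic a \<le> log_harmonic b"
  by (auto simp: log_harmonic_def)

lemma ln_le_log2: "(y::real) \<ge> 1 \<Longrightarrow> ln y \<le> log 2 y"
proof -
  assume y: "y \<ge> 1"
  have l: "0 < ln (2::real)" "ln (2::real) \<le> 1" using ln_le_minus_one[of 2] by auto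
  have "ln y * ln 2 \<le> ln y" using y l by (simp add: mult_left_le)
  then show ?thesis using l by (simp add: log_def pos_le_divide_eq)
qed

lemma log_harmonic_increment:
  assumes "c > 0"
  shows "real c / real (c + k) \<le> log_harmonic (c + k) - log_harmonic k"
proof (cases "k = 0")
  case True
  then show ?thesis using assms by (simp add: log_harmonic_def)
next
  case False
  have pos: "real k > 0" "real (c + k) > 0" using False by auto
  have "1 - real k / real (c + k) \<le> - ln (real k / real (c + k))"
    using ln_le_minus_one[of "real k / real (c + k)"] pos by simp
  also have "\<dots> = ln (real (c + k) / real k)"
    using pos by (simp add: ln_div)
  also have "\<dots> \<le> log 2 (real (c + k) / real k)"
    using pos by (intro ln_le_log2) simp
  also have "\<dots> = log_harmonic (c + k) - log_harmonic k"
    using pos False by (simp add: log_harmonic_def log_divide_pos)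
  finally show ?thesis using pos by (simp add: field_simps)
qed

lemma log_harmonic_greedy_step:
  assumes "c + k \<le> d"
  shows "real c / real d + log_harmonic k \<le> log_harmonic (c + k)"
proof (cases "c = 0")
  case False
  have "real c / real d \<le> real c / real (c + k)"
    using assms False by (intro divide_left_mono) auto
  also have "\<dots> \<le> log_harmonic (c + k) - log_harmonic k"
    using False by (intro log_harmonic_increment) simp
  finally show ?thesis by simp
qed simp

definition cover_degree :: "'a set set \<Rightarrow> 'a \<Rightarrow> nat" where
  "cover_degree F j = card {B \<in> F. j \<in> B}"

definition certified_hitting_set :: "'a set \<Rightarrow> 'a set set \<Rightarrow> 'a set \<Rightarrow> ('a set \<Rightarrow> real) \<Rightarrow> bool" where
  "certified_hitting_set U F S p \<longleftrightarrow> S \<subseteq> U \<and> (\<forall>B\<in>F. S \<inter> B \<noteq> {}) \<and> (\<forall>B\<in>F. p B \<ge> 0)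
     \<and> (\<forall>j\<in>U. (\<Sum>B\<in>{B \<in> F. j \<in> B}. p B) \<le> log_harmonic (cover_degree F j))
     \<and> real (card S) \<le> (\<Sum>B\<in>F. p B)"

lemma certified_hitting_set_insert_max_degree:
  assumes F: "finite F" and i: "i \<in> U" "cover_degree F i = d" "d \<ge> 1"
    and max: "\<forall>j\<in>U. cover_degree F j \<le> d"
    and hs: "certified_hitting_set U {B \<in> F. i \<notin> B} S p"
  shows "certified_hitting_set U F (insert i S) (\<lambda>B. if i \<in> B then 1 / real d else p B)"
proof -
  define F' where "F' = {B \<in> F. i \<notin> B}"
  define p\<^sub>i where "p\<^sub>i B = (if i \<in> B then 1 / real d else p B)" for B
  have sum_split: "(\<Sum>B\<in>A. p\<^sub>i B) = real (card {B \<in> A. i \<in> B}) / real d + (\<Sum>B\<in>{B \<in> A. i \<notin> B}. p B)"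
    if "finite A" for A
  proof -
    have "(\<Sum>B\<in>A. p\<^sub>i B) = (\<Sum>B\<in>A \<inter> {B. i \<in> B}. 1 / real d) + (\<Sum>B\<in>A \<inter> - {B. i \<in> B}. p B)"
      unfolding p\<^sub>i_def using that by (rule sum.If_cases)
    also have "A \<inter> {B. i \<in> B} = {B \<in> A. i \<in> B}" by auto
    also have "A \<inter> - {B. i \<in> B} = {B \<in> A. i \<notin> B}" by auto
    finally show ?thesis by simp
  qed
  have "card (insert i S) \<le> card S + 1"
    by (simp add: card_insert_le_m1)
  then have "real (card (insert i S)) \<le> 1 + real (card S)"
    by simp
  also have "\<dots> \<le> (\<Sum>B\<in>F. p\<^sub>i B)"
    using hs i(2,3) sum_split[OF F]
    by (simp add: certified_hitting_set_def cover_degree_def F'_def)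
  finally have size: "real (card (insert i S)) \<le> (\<Sum>B\<in>F. p\<^sub>i B)" .
  have load: "(\<Sum>B\<in>{B \<in> F. j \<in> B}. p\<^sub>i B) \<le> log_harmonic (cover_degree F j)" if j: "j \<in> U" for j
  proof -
    define c where "c = card {B \<in> {B \<in> F. j \<in> B}. i \<in> B}"
    define k where "k = cover_degree F' j"
    have "cover_degree F j = card ({B \<in> {B \<in> F. j \<in> B}. i \<in> B} \<union> {B \<in> F'. j \<in> B})"
      unfolding cover_degree_def F'_def by (rule arg_cong[where f = card]) auto
    also have "\<dots> = c + k"
      unfolding c_def k_def cover_degree_def using F
      by (intro card_Un_disjoint) (auto simp: F'_def)
    finally have deg: "cover_degree F j = c + k" .
    have F'_j: "{B \<in> {B \<in> F. j \<in> B}. i \<notin> B} = {B \<in> F'. j \<in> B}"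
      unfolding F'_def by auto
    have "(\<Sum>B\<in>{B \<in> F. j \<in> B}. p\<^sub>i B) = real c / real d + (\<Sum>B\<in>{B \<in> F'. j \<in> B}. p B)"
      unfolding c_def F'_j[symmetric] using F by (intro sum_split) simp
    also have "\<dots> \<le> real c / real d + log_harmonic k"
      using hs j by (simp add: certified_hitting_set_def k_def F'_def)
    also have "\<dots> \<le> log_harmonic (cover_degree F j)"
      using log_harmonic_greedy_step[of c k d] max j deg by force
    finally show ?thesis .
  qed
  show ?thesis
    using hs size load i(1) unfolding certified_hitting_set_def p\<^sub>i_def by auto
qed

lemma exists_max_cover_degree:
  assumes "finite U" "B \<in> F" "B \<noteq> {}" "B \<subseteq> U" "finite F"
  obtains i where "i \<in> U" "cover_degree F i \<ge> 1" "\<forall>j\<in>U. cover_degree F j \<le> cover_degree F i"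
proof -
  have "U \<noteq> {}" using assms(3,4) by blast
  then have "Max (cover_degree F ` U) \<in> cover_degree F ` U"
    using assms(1) by (intro Max_in) auto
  then obtain i where "i \<in> U" "cover_degree F i = Max (cover_degree F ` U)"
    by auto
  then have i: "i \<in> U" "\<forall>j\<in>U. cover_degree F j \<le> cover_degree F i"
    using assms(1) by auto
  obtain i\<^sub>0 where "i\<^sub>0 \<in> B" using assms(3) by blast
  then have "cover_degree F i\<^sub>0 \<ge> 1"
    using assms(2,5) by (auto simp: cover_degree_def Suc_le_eq card_gt_0_iff)
  then show ?thesis
    using that i \<open>i\<^sub>0 \<in> B\<close> assms(4) by (meson le_trans subsetD)
qed

lemma greedy_certified_hitting_set:
  assumes U: "finite U" and "finite F" "\<forall>B\<in>F. B \<subseteq> U \<and> B \<noteq> {}"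
  shows "\<exists>S p. certified_hitting_set U F S p"
  using assms(2,3)
proof (induction "card F" arbitrary: F rule: less_induct)
  case less
  show ?case
  proof (cases "F = {}")
    case True
    then show ?thesis
      by (intro exI[of _ "{}"] exI[of _ "\<lambda>_. 0"])
        (simp add: certified_hitting_set_def cover_degree_def log_harmonic_def)
  next
    case False
    then obtain B where "B \<in> F" by auto
    with less.prems U obtain i where i: "i \<in> U" "cover_degree F i \<ge> 1"
        "\<forall>j\<in>U. cover_degree F j \<le> cover_degree F i"
      by (metis exists_max_cover_degree)
    have "{B \<in> F. i \<in> B} \<noteq> {}"
      using i(2) by (force simp: cover_degree_def Suc_le_eq card_gt_0_iff)
    then have "{B \<in> F. i \<notin> B} \<subset> F" by blast
    then have "card {B \<in> F. i \<notin> B} < card F"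
      using less.prems(1) by (simp add: psubset_card_mono)
    then obtain S p where "certified_hitting_set U {B \<in> F. i \<notin> B} S p"
      using less.hyps less.prems by force
    then show ?thesis
      using certified_hitting_set_insert_max_degree[OF less.prems(1) i(1) refl i(2,3)] by blast
  qed
qed

lemma length_dom_f: "y \<in> dom_f N f \<Longrightarrow> length y = N"
  by (simp add: dom_f_def)

lemma length_flip_block [simp]: "length (flip_block x B) = length x"
  by (simp add: flip_block_def)

lemma nth_flip_block: "i < length x \<Longrightarrow> flip_block x B ! i = (if i \<in> B then \<not> x ! i else x ! i)"
  by (simp add: flip_block_def)

lemma sensitive_blocks_subset_Pow: "sensitive_blocks N f x \<subseteq> Pow {..<N}"
  by (auto simp: sensitive_blocks_def)

lemma finite_sensitive_blocks: "finite (sensitive_blocks N f x)"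
  using sensitive_blocks_subset_Pow by (rule finite_subset) simp

lemma empty_not_sensitive_block: "{} \<notin> sensitive_blocks N f x"
proof -
  have "flip_block x {} = x"
    unfolding flip_block_def by (simp add: map_nth)
  then show ?thesis by (simp add: sensitive_blocks_def)
qed

lemma hitting_set_is_certificate:
  assumes x: "x \<in> dom_f N f" and S: "S \<subseteq> {..<N}"
    and hit: "\<forall>B\<in>sensitive_blocks N f x. S \<inter> B \<noteq> {}"
  shows "is_certificate N f x S"
proof -
  have "f y = f x" if y: "y \<in> dom_f N f" "\<forall>i\<in>S. y ! i = x ! i" for y
  proof (rule ccontr)
    assume ne: "f y \<noteq> f x"
    define B where "B = {i. i < N \<and> y ! i \<noteq> x ! i}"
    have "length x = N" "length y = N" using x y(1) by (simp_all add: length_dom_f)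
    then have "flip_block x B = y"
      by (intro nth_equalityI) (auto simp: nth_flip_block B_def)
    then have "B \<in> sensitive_blocks N f x" using y ne by (auto simp: sensitive_blocks_def B_def)
    then obtain i where "i \<in> S" "i \<in> B" using hit by blast
    then show False using y(2) by (simp add: B_def)
  qed
  then show ?thesis unfolding is_certificate_def using S by auto
qed

lemma cert_complexity_le_hitting_set:
  assumes "x \<in> dom_f N f" "S \<subseteq> {..<N}" "\<forall>B\<in>sensitive_blocks N f x. S \<inter> B \<noteq> {}"
  shows "cert_complexity N f x \<le> card S"
proof -
  have "{S. is_certificate N f x S} \<subseteq> Pow {..<N}" by (auto simp: is_certificate_def)
  then have "finite {S. is_certificate N f x S}" by (rule finite_subset) simp
  then show ?thesis unfolding cert_complexity_def
    using hitting_set_is_certificate[OF assms] by (intro Min_le) auto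
qed

lemma card_sensitive_blocks_le_preimage:
  assumes x: "x \<in> dom_f N f" and fx: "f x = Some b"
  shows "card (sensitive_blocks N f x) \<le> card (preimage_f N f (\<not> b))"
proof -
  have "inj_on (flip_block x) (sensitive_blocks N f x)"
  proof
    fix B\<^sub>1 B\<^sub>2 assume B: "B\<^sub>1 \<in> sensitive_blocks N f x" "B\<^sub>2 \<in> sensitive_blocks N f x"
      and eq: "flip_block x B\<^sub>1 = flip_block x B\<^sub>2"
    have "i \<in> B\<^sub>1 \<longleftrightarrow> i \<in> B\<^sub>2" if "i < N" for i
      using arg_cong[OF eq, of "\<lambda>l. l ! i"] that length_dom_f[OF x]
      by (auto simp: nth_flip_block split: if_splits)
    then show "B\<^sub>1 = B\<^sub>2" using B by (auto simp: sensitive_blocks_def)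
  qed
  moreover have "flip_block x ` sensitive_blocks N f x \<subseteq> preimage_f N f (\<not> b)"
    using fx by (auto simp: sensitive_blocks_def preimage_f_def dom_f_def)
  moreover have "finite (preimage_f N f (\<not> b))"
    using finite_lists_length_eq[of "UNIV :: bool set" N]
    by (rule finite_subset[rotated]) (auto simp: preimage_f_def dom_f_def)
  ultimately show ?thesis by (meson card_inj_on_le)
qed

lemma frac_packing_sum_le_length:
  assumes "frac_packing N f x w"
  shows "(\<Sum>B\<in>sensitive_blocks N f x. w B) \<le> real N"
proof -
  let ?F = "sensitive_blocks N f x"
  have "(\<Sum>B\<in>?F. w B) \<le> (\<Sum>B\<in>?F. \<Sum>i\<in>{i\<in>{..<N}. i \<in> B}. w B)"
  proof (rule sum_mono)
    fix B assume B: "B \<in> ?F"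
    then have "{i\<in>{..<N}. i \<in> B} = B" "card B \<ge> 1"
      using empty_not_sensitive_block[of N f x]
      by (auto simp: sensitive_blocks_def Suc_le_eq card_gt_0_iff intro: finite_subset)
    moreover have "w B \<ge> 0" using assms B by (simp add: frac_packing_def)
    ultimately show "w B \<le> (\<Sum>i\<in>{i\<in>{..<N}. i \<in> B}. w B)"
      by (simp add: mult_le_cancel_right1)
  qed
  also have "\<dots> = (\<Sum>i\<in>{..<N}. \<Sum>B\<in>{B\<in>?F. i\<in>B}. w B)"
    using finite_sensitive_blocks by (intro sum.swap_restrict) auto
  also have "\<dots> \<le> (\<Sum>i\<in>{..<N}. 1)"
    using assms by (intro sum_mono) (simp add: frac_packing_def)
  finally show ?thesis by simp
qed

lemma frac_packing_sum_le_RC: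
  assumes "frac_packing N f x w"
  shows "(\<Sum>B\<in>sensitive_blocks N f x. w B) \<le> RC N f x"
  unfolding RC_def
proof (rule cSup_upper)
  show "bdd_above {(\<Sum>B\<in>sensitive_blocks N f x. w B) | w. frac_packing N f x w}"
    using frac_packing_sum_le_length by (intro bdd_aboveI[of _ "real N"]) blast
qed (use assms in blast)

lemma RC_nonneg: "RC N f x \<ge> 0"
  using frac_packing_sum_le_RC[of N f x "\<lambda>_. 0"] by (simp add: frac_packing_def)

lemma frac_packing_scaled_certified_hitting_set:
  assumes hs: "certified_hitting_set {..<N} (sensitive_blocks N f x) S p"
    and M: "M = card (sensitive_blocks N f x)" "M \<ge> 1"
  shows "frac_packing N f x (\<lambda>B. p B / log_harmonic M)"
  unfolding frac_packing_def
proof (intro conjI allI impI ballI)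
  let ?F = "sensitive_blocks N f x"
  have pos: "log_harmonic M > 0" using M(2) by (simp add: log_harmonic_def add_pos_nonneg)
  show "p B / log_harmonic M \<ge> 0" if "B \<in> ?F" for B
    using hs that pos by (simp add: certified_hitting_set_def)
  fix i assume i: "i < N"
  have "cover_degree ?F i \<le> M"
    unfolding M(1) cover_degree_def using finite_sensitive_blocks by (intro card_mono) auto
  then have "log_harmonic (cover_degree ?F i) \<le> log_harmonic M"
    by (rule log_harmonic_mono)
  moreover have "(\<Sum>B\<in>{B\<in>?F. i\<in>B}. p B) \<le> log_harmonic (cover_degree ?F i)"
    using hs i by (simp add: certified_hitting_set_def)
  ultimately have "(\<Sum>B\<in>{B\<in>?F. i\<in>B}. p B) \<le> log_harmonic M"
    by linarith
  then show "(\<Sum>B\<in>{B\<in>?F. i\<in>B}. p B / log_harmonic M) \<le> 1"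
    using pos by (simp add: sum_divide_distrib[symmetric])
qed

lemma cert_complexity_le_RC_log_sensitive_blocks:
  assumes x: "x \<in> dom_f N f"
  shows "real (cert_complexity N f x) \<le> RC N f x * log_harmonic (card (sensitive_blocks N f x))"
proof -
  let ?F = "sensitive_blocks N f x"
  define M where "M = card ?F"
  obtain S p where hs: "certified_hitting_set {..<N} ?F S p"
    using greedy_certified_hitting_set[OF finite_lessThan finite_sensitive_blocks]
      sensitive_blocks_subset_Pow empty_not_sensitive_block by blast
  then have "cert_complexity N f x \<le> card S"
    using cert_complexity_le_hitting_set[OF x] by (simp add: certified_hitting_set_def)
  then have C: "real (cert_complexity N f x) \<le> (\<Sum>B\<in>?F. p B)"
    using hs by (simp add: certified_hitting_set_def)
  show ?thesis
  proof (cases "M = 0")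
    case True
    then show ?thesis
      using C finite_sensitive_blocks[of N f x] by (simp add: M_def log_harmonic_def)
  next
    case False
    then have pos: "log_harmonic M > 0" by (simp add: log_harmonic_def add_pos_nonneg)
    have "(\<Sum>B\<in>?F. p B) / log_harmonic M \<le> RC N f x"
      using frac_packing_sum_le_RC[OF frac_packing_scaled_certified_hitting_set[OF hs M_def]] False
      by (simp add: sum_divide_distrib[symmetric])
    then show ?thesis using C pos by (simp add: M_def pos_divide_le_eq)
  qed
qed

lemma cert_complexity_le_RC_log_preimage:
  assumes x: "x \<in> dom_f N f" and fx: "f x = Some b"
  shows "real (cert_complexity N f x) \<le> RC N f x * (1 + log 2 (real (card (preimage_f N f (\<not> b)))))"
proof -
  let ?m = "card (preimage_f N f (\<not> b))"
  have "log_harmonic (card (sensitive_blocks N f x)) \<le> log_harmonic ?m"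
    using card_sensitive_blocks_le_preimage[OF x fx] by (rule log_harmonic_mono)
  also have "\<dots> \<le> 1 + log 2 (real ?m)"
    by (simp add: log_harmonic_def log_def)
  finally show ?thesis
    using cert_complexity_le_RC_log_sensitive_blocks[OF x] RC_nonneg
    by (meson mult_left_mono order_trans)
qed

theorem lemma21:
  fixes N :: nat and f :: "bool list \<Rightarrow> bool option" and x :: "bool list"
  assumes "x \<in> dom_f N f"
  shows "(f x = Some False \<longrightarrow>
           real (cert_complexity N f x) \<le> RC N f x * (1 + log 2 (real (card (preimage_f N f True)))))
       \<and> (f x = Some True \<longrightarrow>
           real (cert_complexity N f x) \<le> RC N f x * (1 + log 2 (real (card (preimage_f N f False)))))"
  using cert_complexity_le_RC_log_preimage[OF assms, of False]
    cert_complexity_le_RC_log_preimage[OF assms, of True] by simp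

end
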